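(* Let $(D,T,\lambda)$ be a complete structured DNNF and $Z\subseteq\mathrm{var}(D)$. Let $t$ be a non-leaf node of $T$ with children $t_1,t_2$. Let $\tau_1:\mathsf{kept}(t_1)\to\{0,1\}$ be of shape $S_1$ and $\tau_2:\mathsf{kept}(t_2)\to\{0,1\}$ be of shape $S_2$. Then $\tau=\tau_1\cup\tau_2$ (an assignment of $\mathsf{kept}(t)$) is of shape $S_1\bowtie S_2$.
   Context: A DNNF is a Boolean circuit whose input gates are labeled by literals $x$ or $\neg x$, whose other gates are $\wedge$-gates and $\vee$-gates, and in which every $\wedge$-gate is decomposable: the subcircuits rooted at distinct inputs of it mention pairwise disjoint sets of variables. For a gate $v$, $D_v$ denotes the subcircuit rooted at $v$. A vtree for a variable set $X$ is a rooted tree in which every non-leaf node has exactly two children and whose leaves are in bijection with $X$. A complete structured DNNF $(D,T,\lambda)$ consists of a DNNF $D$, a vtree $T$ for $\mathrm{var}(D)$, and a map $\lambda$ assigning to every node $t$ of $T$ a set $\lambda(t)$ of gates of $D$ such that: (i) every gate $u$ of $D$ lies in $\lambda(t_u)$ for exactly one node $t_u$; (ii) if $t$ is a leaf labeled $x$ then $\lambda(t)$ contains only input gates labeled $x$ or $\neg x$; (iii) for no non-leaf node $t$ does $\lambda(t)$ contain an input gate; (iv) every $\wedge$-gate $u$ has exactly two inputs $v_1,v_2$ and $t_{v_1}\ne t_{v_2}$; (v) for every wire from a gate $u$ into a gate $v$, either $v$ is an $\wedge$-gate, $u$ is a $\vee$-gate or an input gate, and $t_u$ is a child of $t_v$; or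 $v$ is a $\vee$-gate, $u$ is an $\wedge$-gate and $t_u=t_v$. For a node $t$ of $T$, $\mathrm{var}(t)$ is the set of variables labeling leaves of the subtree rooted at $t$, $\mathsf{forgot}(t)=Z\cap\mathrm{var}(t)$ and $\mathsf{kept}(t)=\mathrm{var}(t)\setminus\mathsf{forgot}(t)$. Let $O_t$ be the set of gates of $\lambda(t)$ that are not $\wedge$-gates (i.e. the $\vee$-gates of $\lambda(t)$ if $t$ is internal, the input gates of $\lambda(t)$ if $t$ is a leaf). An assignment $\tau:\mathsf{kept}(t)\to\{0,1\}$ is of shape $S\subseteq O_t$ iff $S=\{s\in O_t\mid \exists\sigma:\mathsf{forgot}(t)\to\{0,1\},\ \tau\cup\sigma\text{ satisfies }D_s\}$. For a non-leaf $t$ with children $t_1,t_2$ and $S_1\subseteq O_{t_1}$, $S_2\subseteq O_{t_2}$, $S_1\bowtie S_2\subseteq O_t$ is the set of gates $s\in O_t$ that evaluate to $1$ when every gate of $S_1\cup S_2$ is replaced by the constant $1$ and every gate of $(O_{t_1}\setminus S_1)\cup(O_{t_2}\setminus S_2)$ by the constant $0$. *)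

theory Defs
  imports Main
begin

text \<open>Gate labels: input gates labelled by a literal (variable, polarity;
  Lit x True is x, Lit x False is the negation of x), and AND/OR gates.\<close>
datatype 'v gkind = Lit 'v bool | AndG | OrG

text \<open>A circuit is given by a set of gates G, a labelling kind, and a set of
  wires W; (u,v) in W is a wire from gate u into gate v (u is an input of v).\<close>

definition below :: "('g \<times> 'g) set \<Rightarrow> 'g \<Rightarrow> 'g set" where
  "below W v = {u. (u, v) \<in> W\<^sup>*}"

definition gvars :: "('g \<Rightarrow> 'v gkind) \<Rightarrow> ('g \<times> 'g) set \<Rightarrow> 'g \<Rightarrow> 'v set" where
  "gvars kind W v = {x. \<exists>u \<in> below W v. \<exists>b. kind u = Lit x b}"

definition cvars :: "'g set \<Rightarrow> ('g \<Rightarrow> 'v gkind) \<Rightarrow> ('g \<times> 'g) set \<Rightarrow> 'v set" where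
  "cvars G kind W = (\<Union>v\<in>G. gvars kind W v)"

definition dnnf :: "'g set \<Rightarrow> ('g \<Rightarrow> 'v gkind) \<Rightarrow> ('g \<times> 'g) set \<Rightarrow> bool" where
  "dnnf G kind W \<longleftrightarrow>
     finite G \<and> W \<subseteq> G \<times> G \<and> acyclic W \<and>
     (\<forall>u v x b. (u, v) \<in> W \<longrightarrow> kind v \<noteq> Lit x b) \<and>
     (\<forall>v \<in> G. kind v = AndG \<longrightarrow>
        (\<forall>u1 u2. (u1, v) \<in> W \<longrightarrow> (u2, v) \<in> W \<longrightarrow> u1 \<noteq> u2 \<longrightarrow>
            gvars kind W u1 \<inter> gvars kind W u2 = {}))"

text \<open>Evaluation to 1 of gate g under a partial assignment rho, where the gates
  in one are replaced by the constant 1 and the gates in zero by the constant 0.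
  For an acyclic circuit this least-fixpoint characterisation coincides with
  ordinary evaluation.\<close>
inductive eval1 :: "'g set \<Rightarrow> ('g \<Rightarrow> 'v gkind) \<Rightarrow> ('g \<times> 'g) set \<Rightarrow> ('v \<Rightarrow> bool option)
    \<Rightarrow> 'g set \<Rightarrow> 'g set \<Rightarrow> 'g \<Rightarrow> bool"
  for G kind W rho one zero where
  const1: "g \<in> one \<Longrightarrow> eval1 G kind W rho one zero g"
| lit: "g \<in> G \<Longrightarrow> g \<notin> one \<Longrightarrow> g \<notin> zero \<Longrightarrow> kind g = Lit x b \<Longrightarrow> rho x = Some b
        \<Longrightarrow> eval1 G kind W rho one zero g"
| andg: "g \<in> G \<Longrightarrow> g \<notin> one \<Longrightarrow> g \<notin> zero \<Longrightarrow> kind g = AndG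
        \<Longrightarrow> (\<forall>u. (u, g) \<in> W \<longrightarrow> eval1 G kind W rho one zero u)
        \<Longrightarrow> eval1 G kind W rho one zero g"
| org: "g \<in> G \<Longrightarrow> g \<notin> one \<Longrightarrow> g \<notin> zero \<Longrightarrow> kind g = OrG
        \<Longrightarrow> (u, g) \<in> W \<Longrightarrow> eval1 G kind W rho one zero u
        \<Longrightarrow> eval1 G kind W rho one zero g"

definition sat :: "'g set \<Rightarrow> ('g \<Rightarrow> 'v gkind) \<Rightarrow> ('g \<times> 'g) set \<Rightarrow> ('v \<Rightarrow> bool option) \<Rightarrow> 'g \<Rightarrow> bool" where
  "sat G kind W rho g = eval1 G kind W rho {} {} g"

text \<open>A node of a vtree is identified with the subtree rooted at it (this is
  unambiguous since leaves carry pairwise distinct variables).\<close>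
datatype 'v vtree = VLeaf 'v | VNode "'v vtree" "'v vtree"

fun leaves :: "'v vtree \<Rightarrow> 'v list" where
  "leaves (VLeaf x) = [x]"
| "leaves (VNode l r) = leaves l @ leaves r"

fun subtrees :: "'v vtree \<Rightarrow> 'v vtree set" where
  "subtrees (VLeaf x) = {VLeaf x}"
| "subtrees (VNode l r) = insert (VNode l r) (subtrees l \<union> subtrees r)"

definition vvars :: "'v vtree \<Rightarrow> 'v set" where
  "vvars t = set (leaves t)"

definition is_vtree_for :: "'v vtree \<Rightarrow> 'v set \<Rightarrow> bool" where
  "is_vtree_for T X \<longleftrightarrow> distinct (leaves T) \<and> set (leaves T) = X"

definition tnode :: "'v vtree \<Rightarrow> ('v vtree \<Rightarrow> 'g set) \<Rightarrow> 'g \<Rightarrow> 'v vtree" where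
  "tnode T lam u = (THE t. t \<in> subtrees T \<and> u \<in> lam t)"

definition is_child :: "'v vtree \<Rightarrow> 'v vtree \<Rightarrow> bool" where
  "is_child c p \<longleftrightarrow> (\<exists>l r. p = VNode l r \<and> (c = l \<or> c = r))"

definition complete_sdnnf ::
  "'g set \<Rightarrow> ('g \<Rightarrow> 'v gkind) \<Rightarrow> ('g \<times> 'g) set \<Rightarrow> 'v vtree \<Rightarrow> ('v vtree \<Rightarrow> 'g set) \<Rightarrow> bool" where
  "complete_sdnnf G kind W T lam \<longleftrightarrow>
     dnnf G kind W \<and> is_vtree_for T (cvars G kind W) \<and>
     (\<forall>t \<in> subtrees T. lam t \<subseteq> G) \<and>
     \<comment> \<open>(i)\<close>
     (\<forall>u \<in> G. \<exists>!t. t \<in> subtrees T \<and> u \<in> lam t) \<and>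
     \<comment> \<open>(ii)\<close>
     (\<forall>x. VLeaf x \<in> subtrees T \<longrightarrow> (\<forall>u \<in> lam (VLeaf x). \<exists>b. kind u = Lit x b)) \<and>
     \<comment> \<open>(iii)\<close>
     (\<forall>l r. VNode l r \<in> subtrees T \<longrightarrow> (\<forall>u \<in> lam (VNode l r). \<forall>x b. kind u \<noteq> Lit x b)) \<and>
     \<comment> \<open>(iv)\<close>
     (\<forall>u \<in> G. kind u = AndG \<longrightarrow>
        (\<exists>v1 v2. v1 \<noteq> v2 \<and> {v. (v, u) \<in> W} = {v1, v2} \<and>
                 tnode T lam v1 \<noteq> tnode T lam v2)) \<and>
     \<comment> \<open>(v)\<close>
     (\<forall>u v. (u, v) \<in> W \<longrightarrow>
        (kind v = AndG \<and> kind u \<noteq> AndG \<and> is_child (tnode T lam u) (tnode T lam v)) \<or>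
        (kind v = OrG \<and> kind u = AndG \<and> tnode T lam u = tnode T lam v))"

definition forgot :: "'v set \<Rightarrow> 'v vtree \<Rightarrow> 'v set" where
  "forgot Z t = Z \<inter> vvars t"

definition kept :: "'v set \<Rightarrow> 'v vtree \<Rightarrow> 'v set" where
  "kept Z t = vvars t - forgot Z t"

definition Ogates :: "('g \<Rightarrow> 'v gkind) \<Rightarrow> ('v vtree \<Rightarrow> 'g set) \<Rightarrow> 'v vtree \<Rightarrow> 'g set" where
  "Ogates kind lam t = {g \<in> lam t. kind g \<noteq> AndG}"

text \<open>tau (an assignment of kept(t), i.e. a partial map with domain kept(t)) is of shape S.
  The union tau \<union> sigma of assignments with disjoint domains is tau ++ sigma.\<close>
definition of_shape ::
  "'g set \<Rightarrow> ('g \<Rightarrow> 'v gkind) \<Rightarrow> ('g \<times> 'g) set \<Rightarrow> ('v vtree \<Rightarrow> 'g set) \<Rightarrow> 'v set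
   \<Rightarrow> 'v vtree \<Rightarrow> ('v \<Rightarrow> bool option) \<Rightarrow> 'g set \<Rightarrow> bool" where
  "of_shape G kind W lam Z t tau S \<longleftrightarrow>
     S = {s \<in> Ogates kind lam t. \<exists>sigma. dom sigma = forgot Z t \<and> sat G kind W (tau ++ sigma) s}"

text \<open>S1 \<bowtie> S2: gates of O_t evaluating to 1 when gates of S1 \<union> S2 are replaced by 1 and
  gates of (O_t1 - S1) \<union> (O_t2 - S2) by 0 (no variable is assigned; in a complete
  structured DNNF no literal gate below O_t is reached without passing through a
  replaced gate).\<close>
definition join ::
  "'g set \<Rightarrow> ('g \<Rightarrow> 'v gkind) \<Rightarrow> ('g \<times> 'g) set \<Rightarrow> ('v vtree \<Rightarrow> 'g set)
   \<Rightarrow> 'v vtree \<Rightarrow> 'v vtree \<Rightarrow> 'g set \<Rightarrow> 'g set \<Rightarrow> 'g set" where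
  "join G kind W lam t1 t2 S1 S2 =
     {s \<in> Ogates kind lam (VNode t1 t2).
        eval1 G kind W Map.empty (S1 \<union> S2)
          ((Ogates kind lam t1 - S1) \<union> (Ogates kind lam t2 - S2)) s}"

end

theory Submission
  imports Defs
begin

text \<open>Every gate s of O_t is an OR-gate at t whose inputs are AND-gates at t, and each of these has
  exactly one input a in O_t1 and one input b in O_t2. Both sides of the claim are therefore unions,
  over such input pairs (a, b), of a condition on a conjoined with a condition on b. For the join
  the conditions are a \<in> S1 and b \<in> S2. For the shape of \<tau>1 \<union> \<tau>2, the gate a only reads
  variables of t1 and b only variables of t2, and forgot(t) is the disjoint union of forgot(t1) and
  forgot(t2); so a common extension \<sigma> satisfying a and b exists iff independent extensions \<sigma>1
  and \<sigma>2 exist, which by the shape hypotheses means a \<in> S1 and b \<in> S2.\<close>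

lemma subtrees_refl: "t \<in> subtrees t"
  by (cases t) auto

lemma subtrees_trans: "s \<in> subtrees t \<Longrightarrow> u \<in> subtrees s \<Longrightarrow> u \<in> subtrees t"
  by (induction t) auto

lemma vvars_subtree: "s \<in> subtrees t \<Longrightarrow> vvars s \<subseteq> vvars t"
  unfolding vvars_def by (induction t) auto

lemma distinct_leaves_subtree: "s \<in> subtrees t \<Longrightarrow> distinct (leaves t) \<Longrightarrow> distinct (leaves s)"
  by (induction t) auto

lemma vvars_nonempty: "vvars t \<noteq> {}"
  unfolding vvars_def by (induction t) auto

lemma children_vvars_disjoint:
  assumes "distinct (leaves (VNode l r))"
  shows "vvars l \<inter> vvars r = {}" and "l \<noteq> r"
proof -
  show disj: "vvars l \<inter> vvars r = {}"
    using assms unfolding vvars_def by simp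
  show "l \<noteq> r"
  proof
    assume "l = r"
    with disj have "vvars l = {}" by simp
    with vvars_nonempty show False by blast
  qed
qed

lemma is_child_subtree: "is_child c p \<Longrightarrow> c \<in> subtrees p"
  unfolding is_child_def using subtrees_refl[of c] by auto

lemma forgot_node:
  "forgot Z (VNode t1 t2) = forgot Z t1 \<union> forgot Z t2" "forgot Z t \<subseteq> vvars t"
  unfolding forgot_def vvars_def by auto

lemma kept_node:
  "kept Z (VNode t1 t2) = kept Z t1 \<union> kept Z t2" "kept Z t \<subseteq> vvars t"
  unfolding kept_def forgot_def vvars_def by auto

lemma Ogates_subset_lam: "Ogates kind lam t \<subseteq> lam t"
  unfolding Ogates_def by blast

lemma gvars_mono: "(u, g) \<in> W \<Longrightarrow> gvars kind W u \<subseteq> gvars kind W g"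
  unfolding gvars_def below_def by (auto intro: rtrancl_into_rtrancl)

lemma eval1_cong_gvars:
  "eval1 G kind W rho one zero g \<Longrightarrow> (\<forall>x \<in> gvars kind W g. rho x = rho' x)
   \<Longrightarrow> eval1 G kind W rho' one zero g"
proof (induction rule: eval1.induct)
  case (const1 g)
  then show ?case by (auto intro: eval1.const1)
next
  case (lit g x b)
  have "x \<in> gvars kind W g"
    using lit unfolding gvars_def below_def by auto
  then show ?case using lit by (auto intro: eval1.lit)
next
  case (andg g)
  have "eval1 G kind W rho' one zero u" if u: "(u, g) \<in> W" for u
  proof -
    have "gvars kind W u \<subseteq> gvars kind W g"
      using u by (rule gvars_mono)
    then have "\<forall>x \<in> gvars kind W u. rho x = rho' x"
      using andg.prems by blast
    then show ?thesis using andg.IH u by blast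
  qed
  then show ?case using andg.hyps by (intro eval1.andg) auto
next
  case (org g u)
  have "gvars kind W u \<subseteq> gvars kind W g"
    using org.hyps(5) by (rule gvars_mono)
  then have "\<forall>x \<in> gvars kind W u. rho x = rho' x"
    using org.prems by blast
  then have "eval1 G kind W rho' one zero u"
    using org.IH by blast
  then show ?case using org.hyps by (intro eval1.org[OF _ _ _ _ org.hyps(5)]) auto
qed

lemma eval1_replaced: "g \<in> one \<union> zero \<Longrightarrow> eval1 G kind W rho one zero g \<longleftrightarrow> g \<in> one"
  by (auto elim: eval1.cases intro: eval1.const1)

lemma eval1_OrG_iff:
  assumes "g \<in> G" "g \<notin> one \<union> zero" "kind g = OrG"
  shows "eval1 G kind W rho one zero g \<longleftrightarrow> (\<exists>u. (u, g) \<in> W \<and> eval1 G kind W rho one zero u)"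
  using assms by (auto elim: eval1.cases intro: eval1.org)

lemma eval1_AndG_iff:
  assumes "g \<in> G" "g \<notin> one \<union> zero" "kind g = AndG"
  shows "eval1 G kind W rho one zero g \<longleftrightarrow> (\<forall>u. (u, g) \<in> W \<longrightarrow> eval1 G kind W rho one zero u)"
  using assms by (auto elim: eval1.cases intro: eval1.andg)

lemma map_add_agree_left:
  "x \<notin> dom m2 \<Longrightarrow> s x = s' x \<Longrightarrow> (m1 ++ m2 ++ s) x = (m1 ++ s') x"
  by (auto simp: map_add_def split: option.split)

lemma map_add_agree_right:
  "x \<notin> dom m1 \<Longrightarrow> s x = s' x \<Longrightarrow> (m1 ++ m2 ++ s) x = (m2 ++ s') x"
  by (auto simp: map_add_def split: option.split)

locale complete_structured_dnnf =
  fixes G :: "'g set" and kind :: "'g \<Rightarrow> 'v gkind" and W :: "('g \<times> 'g) set"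
    and T :: "'v vtree" and lam :: "'v vtree \<Rightarrow> 'g set"
  assumes complete: "complete_sdnnf G kind W T lam"
begin

lemma wire_gates: "(u, v) \<in> W \<Longrightarrow> u \<in> G \<and> v \<in> G"
  using complete unfolding complete_sdnnf_def dnnf_def by auto

lemma lam_gates: "t \<in> subtrees T \<Longrightarrow> lam t \<subseteq> G"
  using complete unfolding complete_sdnnf_def by auto

lemma distinct_leaves: "distinct (leaves T)"
  using complete unfolding complete_sdnnf_def is_vtree_for_def by auto

lemma wire_cases:
  "(u, v) \<in> W \<Longrightarrow>
     (kind v = AndG \<and> kind u \<noteq> AndG \<and> is_child (tnode T lam u) (tnode T lam v)) \<or>
     (kind v = OrG \<and> kind u = AndG \<and> tnode T lam u = tnode T lam v)"
  using complete unfolding complete_sdnnf_def by auto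

lemma unique_node: "u \<in> G \<Longrightarrow> \<exists>!t. t \<in> subtrees T \<and> u \<in> lam t"
  using complete unfolding complete_sdnnf_def by auto

lemma tnode_eq: "t \<in> subtrees T \<Longrightarrow> u \<in> lam t \<Longrightarrow> tnode T lam u = t"
  unfolding tnode_def using unique_node lam_gates by (blast intro: the_equality)

lemma tnode_in_lam: "u \<in> G \<Longrightarrow> tnode T lam u \<in> subtrees T \<and> u \<in> lam (tnode T lam u)"
  unfolding tnode_def using unique_node by (rule theI')

lemma lam_disjoint: "a \<in> subtrees T \<Longrightarrow> b \<in> subtrees T \<Longrightarrow> a \<noteq> b \<Longrightarrow> lam a \<inter> lam b = {}"
  using tnode_eq by blast

lemma tnode_below:
  assumes "(u, g) \<in> W\<^sup>*" "g \<in> G"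
  shows "u \<in> G \<and> tnode T lam u \<in> subtrees (tnode T lam g)"
  using assms(1)
proof (induction rule: converse_rtrancl_induct)
  case base
  then show ?case using assms(2) subtrees_refl by blast
next
  case (step y z)
  have "tnode T lam y \<in> subtrees (tnode T lam z)"
    using wire_cases[OF step(1)] is_child_subtree subtrees_refl by metis
  then show ?case using step wire_gates subtrees_trans by blast
qed

lemma gvars_tnode:
  assumes "g \<in> G"
  shows "gvars kind W g \<subseteq> vvars (tnode T lam g)"
proof
  fix x
  assume "x \<in> gvars kind W g"
  then obtain u b where u: "(u, g) \<in> W\<^sup>*" "kind u = Lit x b"
    unfolding gvars_def below_def by auto
  with tnode_below assms have "u \<in> G" "tnode T lam u \<in> subtrees (tnode T lam g)"
    by auto
  moreover have "tnode T lam u = VLeaf x"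
  proof (cases "tnode T lam u")
    case (VLeaf y)
    with complete \<open>u \<in> G\<close> tnode_in_lam have "\<exists>b. kind u = Lit y b"
      unfolding complete_sdnnf_def by metis
    with u(2) VLeaf show ?thesis by auto
  next
    case (VNode l r)
    with complete \<open>u \<in> G\<close> tnode_in_lam u(2) show ?thesis
      unfolding complete_sdnnf_def by metis
  qed
  ultimately show "x \<in> vvars (tnode T lam g)"
    using vvars_subtree by (fastforce simp: vvars_def)
qed

lemma sat_cong_vvars:
  assumes "t \<in> subtrees T" "g \<in> lam t" "\<forall>x \<in> vvars t. rho x = rho' x"
    and "sat G kind W rho g"
  shows "sat G kind W rho' g"
proof -
  have "gvars kind W g \<subseteq> vvars t"
    using gvars_tnode tnode_eq assms(1,2) lam_gates by blast
  with assms(3) have "\<forall>x \<in> gvars kind W g. rho x = rho' x"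
    by blast
  with assms(4) show ?thesis
    unfolding sat_def by (rule eval1_cong_gvars)
qed

lemma children_subtrees:
  assumes "VNode t1 t2 \<in> subtrees T"
  shows "t1 \<in> subtrees T" "t2 \<in> subtrees T"
  using subtrees_trans[OF assms] subtrees_refl by auto

lemma Ogates_node_OrG:
  assumes "VNode t1 t2 \<in> subtrees T" "s \<in> Ogates kind lam (VNode t1 t2)"
  shows "s \<in> G \<and> kind s = OrG"
proof -
  have "\<forall>x b. kind s \<noteq> Lit x b"
    using complete assms unfolding complete_sdnnf_def Ogates_def by blast
  with assms show ?thesis
    using lam_gates unfolding Ogates_def by (cases "kind s") auto
qed

lemma AndG_input_of_Ogates_node:
  assumes node: "VNode t1 t2 \<in> subtrees T"
    and s: "s \<in> Ogates kind lam (VNode t1 t2)" and us: "(u, s) \<in> W"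
  shows "u \<in> lam (VNode t1 t2) \<and> kind u = AndG \<and>
    (\<exists>a b. {v. (v, u) \<in> W} = {a, b} \<and> a \<in> Ogates kind lam t1 \<and> b \<in> Ogates kind lam t2)"
proof -
  have "tnode T lam s = VNode t1 t2"
    using tnode_eq node s unfolding Ogates_def by blast
  moreover have "kind s = OrG"
    using Ogates_node_OrG node s by blast
  ultimately have ku: "kind u = AndG" and tnu: "tnode T lam u = VNode t1 t2"
    using wire_cases[OF us] by auto
  have "u \<in> G"
    using wire_gates us by blast
  with tnu tnode_in_lam have ul: "u \<in> lam (VNode t1 t2)"
    by metis
  obtain v1 v2 where v: "{v. (v, u) \<in> W} = {v1, v2}" "tnode T lam v1 \<noteq> tnode T lam v2"
    using complete \<open>u \<in> G\<close> ku unfolding complete_sdnnf_def by blast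
  have input: "tnode T lam v \<in> {t1, t2} \<and> v \<in> Ogates kind lam (tnode T lam v)"
    if "v \<in> {v1, v2}" for v
  proof -
    have vu: "(v, u) \<in> W"
      using that v(1) by blast
    then have "kind v \<noteq> AndG \<and> is_child (tnode T lam v) (VNode t1 t2)"
      using wire_cases ku tnu by fastforce
    moreover have "v \<in> G"
      using wire_gates vu by blast
    ultimately show ?thesis
      using tnode_in_lam unfolding is_child_def Ogates_def by auto
  qed
  have "\<exists>a b. {v. (v, u) \<in> W} = {a, b} \<and> a \<in> Ogates kind lam t1 \<and> b \<in> Ogates kind lam t2"
  proof (cases "tnode T lam v1 = t1")
    case True
    with input v show ?thesis by fastforce
  next
    case False
    with input v have "v2 \<in> Ogates kind lam t1" "v1 \<in> Ogates kind lam t2"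
      by fastforce+
    with v(1) show ?thesis
      by (metis insert_commute)
  qed
  with ul ku show ?thesis by blast
qed

lemma eval1_Ogates_node_iff:
  assumes node: "VNode t1 t2 \<in> subtrees T" and s: "s \<in> Ogates kind lam (VNode t1 t2)"
    and untouched: "(one \<union> zero) \<inter> lam (VNode t1 t2) = {}"
  shows "eval1 G kind W rho one zero s \<longleftrightarrow>
    (\<exists>u a b. (u, s) \<in> W \<and> {v. (v, u) \<in> W} = {a, b} \<and>
       a \<in> Ogates kind lam t1 \<and> b \<in> Ogates kind lam t2 \<and>
       eval1 G kind W rho one zero a \<and> eval1 G kind W rho one zero b)"
    (is "?eval s \<longleftrightarrow> ?rhs")
proof -
  have and_iff: "?eval u \<longleftrightarrow> (\<forall>v. (v, u) \<in> W \<longrightarrow> ?eval v)" if us: "(u, s) \<in> W" for u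
  proof (rule eval1_AndG_iff)
    have "u \<in> lam (VNode t1 t2)" "kind u = AndG"
      using AndG_input_of_Ogates_node[OF node s us] by auto
    with untouched lam_gates[OF node]
    show "u \<in> G" "u \<notin> one \<union> zero" "kind u = AndG"
      by auto
  qed
  have "s \<notin> one \<union> zero"
    using s untouched unfolding Ogates_def by blast
  then have or_iff: "?eval s \<longleftrightarrow> (\<exists>u. (u, s) \<in> W \<and> ?eval u)"
    using Ogates_node_OrG[OF node s] by (intro eval1_OrG_iff) auto
  show ?thesis
  proof
    assume "?eval s"
    then obtain u where us: "(u, s) \<in> W" and "?eval u"
      using or_iff by blast
    then have inputs: "\<forall>v. (v, u) \<in> W \<longrightarrow> ?eval v"
      using and_iff by blast
    from AndG_input_of_Ogates_node[OF node s us] obtain a b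
      where "{v. (v, u) \<in> W} = {a, b}" "a \<in> Ogates kind lam t1" "b \<in> Ogates kind lam t2"
      by blast
    with us inputs show ?rhs
      by blast
  next
    assume ?rhs
    then obtain u a b where us: "(u, s) \<in> W" and ab: "{v. (v, u) \<in> W} = {a, b}"
      and "?eval a" "?eval b"
      by blast
    then have "\<forall>v. (v, u) \<in> W \<longrightarrow> ?eval v"
      by (auto simp: set_eq_iff)
    with us and_iff or_iff show "?eval s"
      by blast
  qed
qed

lemma node_children_disjoint:
  assumes node: "VNode t1 t2 \<in> subtrees T"
  shows "vvars t1 \<inter> vvars t2 = {}" "lam t1 \<inter> lam t2 = {}"
    "lam (VNode t1 t2) \<inter> lam t1 = {}" "lam (VNode t1 t2) \<inter> lam t2 = {}"
proof -
  have "distinct (leaves (VNode t1 t2))"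
    using distinct_leaves_subtree[OF node distinct_leaves] .
  then show "vvars t1 \<inter> vvars t2 = {}"
    by (rule children_vvars_disjoint)
  from \<open>distinct (leaves (VNode t1 t2))\<close> have "t1 \<noteq> t2"
    by (rule children_vvars_disjoint)
  with children_subtrees[OF node] show "lam t1 \<inter> lam t2 = {}"
    by (rule lam_disjoint)
  show "lam (VNode t1 t2) \<inter> lam t1 = {}" "lam (VNode t1 t2) \<inter> lam t2 = {}"
    using lam_disjoint node children_subtrees[OF node] by auto
qed

lemma join_Ogates_node:
  assumes node: "VNode t1 t2 \<in> subtrees T"
    and S1: "S1 \<subseteq> Ogates kind lam t1" and S2: "S2 \<subseteq> Ogates kind lam t2"
  shows "join G kind W lam t1 t2 S1 S2 =
    {s \<in> Ogates kind lam (VNode t1 t2). \<exists>u a b. (u, s) \<in> W \<and> {v. (v, u) \<in> W} = {a, b} \<and>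
       a \<in> Ogates kind lam t1 \<and> b \<in> Ogates kind lam t2 \<and> a \<in> S1 \<and> b \<in> S2}"
proof -
  define one where "one = S1 \<union> S2"
  define zero where "zero = (Ogates kind lam t1 - S1) \<union> (Ogates kind lam t2 - S2)"
  note disj = node_children_disjoint[OF node]
  have untouched: "(one \<union> zero) \<inter> lam (VNode t1 t2) = {}"
    using S1 S2 Ogates_subset_lam[of kind lam t1] Ogates_subset_lam[of kind lam t2] disj
    unfolding one_def zero_def by blast
  have replaced1: "eval1 G kind W Map.empty one zero a \<longleftrightarrow> a \<in> S1"
    if a: "a \<in> Ogates kind lam t1" for a
  proof -
    have "a \<in> one \<union> zero"
      using a unfolding one_def zero_def by blast
    then have "eval1 G kind W Map.empty one zero a \<longleftrightarrow> a \<in> one"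
      by (rule eval1_replaced)
    also have "\<dots> \<longleftrightarrow> a \<in> S1"
      using a S2 Ogates_subset_lam[of kind lam t1] Ogates_subset_lam[of kind lam t2] disj(2)
      unfolding one_def by blast
    finally show ?thesis .
  qed
  have replaced2: "eval1 G kind W Map.empty one zero b \<longleftrightarrow> b \<in> S2"
    if b: "b \<in> Ogates kind lam t2" for b
  proof -
    have "b \<in> one \<union> zero"
      using b unfolding one_def zero_def by blast
    then have "eval1 G kind W Map.empty one zero b \<longleftrightarrow> b \<in> one"
      by (rule eval1_replaced)
    also have "\<dots> \<longleftrightarrow> b \<in> S2"
      using b S1 Ogates_subset_lam[of kind lam t1] Ogates_subset_lam[of kind lam t2] disj(2)
      unfolding one_def by blast
    finally show ?thesis .
  qed
  show ?thesis
    unfolding join_def one_def[symmetric] zero_def[symmetric]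
  proof (intro Collect_cong conj_cong refl)
    fix s
    assume "s \<in> Ogates kind lam (VNode t1 t2)"
    then show "eval1 G kind W Map.empty one zero s \<longleftrightarrow>
      (\<exists>u a b. (u, s) \<in> W \<and> {v. (v, u) \<in> W} = {a, b} \<and>
         a \<in> Ogates kind lam t1 \<and> b \<in> Ogates kind lam t2 \<and> a \<in> S1 \<and> b \<in> S2)"
      using eval1_Ogates_node_iff[OF node _ untouched]
      by (simp add: replaced1 replaced2 cong: conj_cong)
  qed
qed

lemma sat_restrict_to_children:
  assumes node: "VNode t1 t2 \<in> subtrees T"
    and tau1: "dom tau1 \<subseteq> vvars t1" and tau2: "dom tau2 \<subseteq> vvars t2"
    and sigma: "dom sigma = forgot Z (VNode t1 t2)"
    and a: "a \<in> lam t1" "sat G kind W (tau1 ++ tau2 ++ sigma) a"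
    and b: "b \<in> lam t2" "sat G kind W (tau1 ++ tau2 ++ sigma) b"
  shows "sat G kind W (tau1 ++ sigma |` forgot Z t1) a"
    and "sat G kind W (tau2 ++ sigma |` forgot Z t2) b"
proof -
  note disj = node_children_disjoint(1)[OF node]
  note t12 = children_subtrees[OF node]
  have "\<forall>x \<in> vvars t1. (tau1 ++ tau2 ++ sigma) x = (tau1 ++ sigma |` forgot Z t1) x"
  proof
    fix x
    assume "x \<in> vvars t1"
    then have "x \<notin> dom tau2" "x \<notin> forgot Z t2"
      using tau2 forgot_node(2)[of Z t2] disj by blast+
    moreover from this have "sigma x = (sigma |` forgot Z t1) x"
      using sigma forgot_node(1)[of Z t1 t2] by (auto simp: restrict_map_def domIff)
    ultimately show "(tau1 ++ tau2 ++ sigma) x = (tau1 ++ sigma |` forgot Z t1) x"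
      by (blast intro: map_add_agree_left)
  qed
  from t12(1) a(1) this a(2) show "sat G kind W (tau1 ++ sigma |` forgot Z t1) a"
    by (rule sat_cong_vvars)
  have "\<forall>x \<in> vvars t2. (tau1 ++ tau2 ++ sigma) x = (tau2 ++ sigma |` forgot Z t2) x"
  proof
    fix x
    assume "x \<in> vvars t2"
    then have "x \<notin> dom tau1" "x \<notin> forgot Z t1"
      using tau1 forgot_node(2)[of Z t1] disj by blast+
    moreover from this have "sigma x = (sigma |` forgot Z t2) x"
      using sigma forgot_node(1)[of Z t1 t2] by (auto simp: restrict_map_def domIff)
    ultimately show "(tau1 ++ tau2 ++ sigma) x = (tau2 ++ sigma |` forgot Z t2) x"
      by (blast intro: map_add_agree_right)
  qed
  from t12(2) b(1) this b(2) show "sat G kind W (tau2 ++ sigma |` forgot Z t2) b"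
    by (rule sat_cong_vvars)
qed

lemma sat_combine_children:
  assumes node: "VNode t1 t2 \<in> subtrees T"
    and tau1: "dom tau1 \<subseteq> vvars t1" and tau2: "dom tau2 \<subseteq> vvars t2"
    and sigma1: "dom sigma1 = forgot Z t1" and sigma2: "dom sigma2 = forgot Z t2"
    and a: "a \<in> lam t1" "sat G kind W (tau1 ++ sigma1) a"
    and b: "b \<in> lam t2" "sat G kind W (tau2 ++ sigma2) b"
  shows "sat G kind W (tau1 ++ tau2 ++ (sigma1 ++ sigma2)) a"
    and "sat G kind W (tau1 ++ tau2 ++ (sigma1 ++ sigma2)) b"
proof -
  note disj = node_children_disjoint(1)[OF node]
  note t12 = children_subtrees[OF node]
  have "\<forall>x \<in> vvars t1. (tau1 ++ sigma1) x = (tau1 ++ tau2 ++ (sigma1 ++ sigma2)) x"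
  proof
    fix x
    assume "x \<in> vvars t1"
    then have "x \<notin> dom tau2" "x \<notin> dom sigma2"
      using tau2 sigma2 forgot_node(2)[of Z t2] disj by blast+
    then have "(sigma1 ++ sigma2) x = sigma1 x"
      by (simp add: map_add_dom_app_simps(3))
    with \<open>x \<notin> dom tau2\<close> show "(tau1 ++ sigma1) x = (tau1 ++ tau2 ++ (sigma1 ++ sigma2)) x"
      by (metis map_add_agree_left)
  qed
  from t12(1) a(1) this a(2) show "sat G kind W (tau1 ++ tau2 ++ (sigma1 ++ sigma2)) a"
    by (rule sat_cong_vvars)
  have "\<forall>x \<in> vvars t2. (tau2 ++ sigma2) x = (tau1 ++ tau2 ++ (sigma1 ++ sigma2)) x"
  proof
    fix x
    assume "x \<in> vvars t2"
    then have "x \<notin> dom tau1" "x \<notin> dom sigma1"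
      using tau1 sigma1 forgot_node(2)[of Z t1] disj by blast+
    then have "(sigma1 ++ sigma2) x = sigma2 x"
      by (auto simp: map_add_def split: option.split)
    with \<open>x \<notin> dom tau1\<close> show "(tau2 ++ sigma2) x = (tau1 ++ tau2 ++ (sigma1 ++ sigma2)) x"
      by (metis map_add_agree_right)
  qed
  from t12(2) b(1) this b(2) show "sat G kind W (tau1 ++ tau2 ++ (sigma1 ++ sigma2)) b"
    by (rule sat_cong_vvars)
qed

lemma ex_sat_split:
  assumes node: "VNode t1 t2 \<in> subtrees T"
    and tau1: "dom tau1 \<subseteq> vvars t1" and tau2: "dom tau2 \<subseteq> vvars t2"
    and a: "a \<in> lam t1" and b: "b \<in> lam t2"
  shows "(\<exists>sigma. dom sigma = forgot Z (VNode t1 t2) \<and>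
            sat G kind W (tau1 ++ tau2 ++ sigma) a \<and> sat G kind W (tau1 ++ tau2 ++ sigma) b)
    \<longleftrightarrow> (\<exists>sigma1. dom sigma1 = forgot Z t1 \<and> sat G kind W (tau1 ++ sigma1) a) \<and>
        (\<exists>sigma2. dom sigma2 = forgot Z t2 \<and> sat G kind W (tau2 ++ sigma2) b)"
proof
  assume "\<exists>sigma. dom sigma = forgot Z (VNode t1 t2) \<and>
    sat G kind W (tau1 ++ tau2 ++ sigma) a \<and> sat G kind W (tau1 ++ tau2 ++ sigma) b"
  then obtain sigma where sigma: "dom sigma = forgot Z (VNode t1 t2)"
    and "sat G kind W (tau1 ++ tau2 ++ sigma) a" "sat G kind W (tau1 ++ tau2 ++ sigma) b"
    by blast
  with sat_restrict_to_children[OF node tau1 tau2 sigma a(1) _ b(1)]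
  have "sat G kind W (tau1 ++ sigma |` forgot Z t1) a" "sat G kind W (tau2 ++ sigma |` forgot Z t2) b"
    by blast+
  moreover have "dom (sigma |` forgot Z t) = forgot Z t" if "t \<in> {t1, t2}" for t
    using sigma that by (auto simp: forgot_node(1))
  ultimately show "(\<exists>sigma1. dom sigma1 = forgot Z t1 \<and> sat G kind W (tau1 ++ sigma1) a) \<and>
      (\<exists>sigma2. dom sigma2 = forgot Z t2 \<and> sat G kind W (tau2 ++ sigma2) b)"
    by blast
next
  assume "(\<exists>sigma1. dom sigma1 = forgot Z t1 \<and> sat G kind W (tau1 ++ sigma1) a) \<and>
      (\<exists>sigma2. dom sigma2 = forgot Z t2 \<and> sat G kind W (tau2 ++ sigma2) b)"
  then obtain sigma1 sigma2 where sigma1: "dom sigma1 = forgot Z t1" "sat G kind W (tau1 ++ sigma1) a"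
    and sigma2: "dom sigma2 = forgot Z t2" "sat G kind W (tau2 ++ sigma2) b"
    by blast
  have "dom (sigma1 ++ sigma2) = forgot Z (VNode t1 t2)"
    using sigma1(1) sigma2(1) by (auto simp: forgot_node(1))
  with sat_combine_children[OF node tau1 tau2 sigma1(1) sigma2(1) a sigma1(2) b sigma2(2)]
  show "\<exists>sigma. dom sigma = forgot Z (VNode t1 t2) \<and>
    sat G kind W (tau1 ++ tau2 ++ sigma) a \<and> sat G kind W (tau1 ++ tau2 ++ sigma) b"
    by blast
qed

lemma ex_sat_Ogates_node_iff:
  assumes node: "VNode t1 t2 \<in> subtrees T"
    and tau1: "dom tau1 \<subseteq> vvars t1" and tau2: "dom tau2 \<subseteq> vvars t2"
    and s: "s \<in> Ogates kind lam (VNode t1 t2)"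
  shows "(\<exists>sigma. dom sigma = forgot Z (VNode t1 t2) \<and> sat G kind W (tau1 ++ tau2 ++ sigma) s)
    \<longleftrightarrow> (\<exists>u a b. (u, s) \<in> W \<and> {v. (v, u) \<in> W} = {a, b} \<and>
          a \<in> Ogates kind lam t1 \<and> b \<in> Ogates kind lam t2 \<and>
          (\<exists>sigma1. dom sigma1 = forgot Z t1 \<and> sat G kind W (tau1 ++ sigma1) a) \<and>
          (\<exists>sigma2. dom sigma2 = forgot Z t2 \<and> sat G kind W (tau2 ++ sigma2) b))"
    (is "_ \<longleftrightarrow> ?rhs")
proof -
  have sat_iff: "sat G kind W rho s \<longleftrightarrow>
    (\<exists>u a b. (u, s) \<in> W \<and> {v. (v, u) \<in> W} = {a, b} \<and>
       a \<in> Ogates kind lam t1 \<and> b \<in> Ogates kind lam t2 \<and>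
       sat G kind W rho a \<and> sat G kind W rho b)" for rho
    unfolding sat_def using eval1_Ogates_node_iff[OF node s] by simp
  have split: "(\<exists>sigma. dom sigma = forgot Z (VNode t1 t2) \<and>
        sat G kind W (tau1 ++ tau2 ++ sigma) a \<and> sat G kind W (tau1 ++ tau2 ++ sigma) b)
      \<longleftrightarrow> (\<exists>sigma1. dom sigma1 = forgot Z t1 \<and> sat G kind W (tau1 ++ sigma1) a) \<and>
          (\<exists>sigma2. dom sigma2 = forgot Z t2 \<and> sat G kind W (tau2 ++ sigma2) b)"
    if "a \<in> Ogates kind lam t1" "b \<in> Ogates kind lam t2" for a b
    using that unfolding Ogates_def by (intro ex_sat_split[OF node tau1 tau2]) auto
  have "(\<exists>sigma. dom sigma = forgot Z (VNode t1 t2) \<and> sat G kind W (tau1 ++ tau2 ++ sigma) s)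
    \<longleftrightarrow> (\<exists>u a b. (u, s) \<in> W \<and> {v. (v, u) \<in> W} = {a, b} \<and>
          a \<in> Ogates kind lam t1 \<and> b \<in> Ogates kind lam t2 \<and>
          (\<exists>sigma. dom sigma = forgot Z (VNode t1 t2) \<and>
             sat G kind W (tau1 ++ tau2 ++ sigma) a \<and> sat G kind W (tau1 ++ tau2 ++ sigma) b))"
    unfolding sat_iff by blast
  also have "\<dots> \<longleftrightarrow> ?rhs"
    by (simp add: split cong: conj_cong)
  finally show ?thesis .
qed

end

theorem lemma3:
  fixes G :: "'g set" and kind :: "'g \<Rightarrow> 'v gkind" and W :: "('g \<times> 'g) set"
    and T :: "'v vtree" and lam :: "'v vtree \<Rightarrow> 'g set" and Z :: "'v set"
    and t1 t2 :: "'v vtree" and tau1 tau2 :: "'v \<Rightarrow> bool option" and S1 S2 :: "'g set"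
  assumes "complete_sdnnf G kind W T lam"
    and "Z \<subseteq> cvars G kind W"
    and "VNode t1 t2 \<in> subtrees T"
    and "dom tau1 = kept Z t1" and "of_shape G kind W lam Z t1 tau1 S1"
    and "dom tau2 = kept Z t2" and "of_shape G kind W lam Z t2 tau2 S2"
  shows "dom (tau1 ++ tau2) = kept Z (VNode t1 t2)
     \<and> of_shape G kind W lam Z (VNode t1 t2) (tau1 ++ tau2) (join G kind W lam t1 t2 S1 S2)"
proof
  interpret complete_structured_dnnf G kind W T lam
    using assms(1) by unfold_locales
  show "dom (tau1 ++ tau2) = kept Z (VNode t1 t2)"
    using assms(4,6) by (simp add: kept_node(1) Un_commute)
  have dom1: "dom tau1 \<subseteq> vvars t1" and dom2: "dom tau2 \<subseteq> vvars t2"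
    using assms(4,6) kept_node(2)[of Z t1] kept_node(2)[of Z t2] by auto
  have S1: "a \<in> S1 \<longleftrightarrow> (\<exists>sigma1. dom sigma1 = forgot Z t1 \<and> sat G kind W (tau1 ++ sigma1) a)"
    if "a \<in> Ogates kind lam t1" for a
    using assms(5) that unfolding of_shape_def by blast
  have S2: "b \<in> S2 \<longleftrightarrow> (\<exists>sigma2. dom sigma2 = forgot Z t2 \<and> sat G kind W (tau2 ++ sigma2) b)"
    if "b \<in> Ogates kind lam t2" for b
    using assms(7) that unfolding of_shape_def by blast
  have "S1 \<subseteq> Ogates kind lam t1" "S2 \<subseteq> Ogates kind lam t2"
    using assms(5,7) unfolding of_shape_def by auto
  with assms(3) show "of_shape G kind W lam Z (VNode t1 t2) (tau1 ++ tau2) (join G kind W lam t1 t2 S1 S2)"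
    unfolding of_shape_def
    by (simp add: join_Ogates_node ex_sat_Ogates_node_iff[OF assms(3) dom1 dom2] S1 S2 cong: conj_cong)
qed

end
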